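(* Let $X$ be a compact K\"ahler space endowed with a symmetric bilinear (quadratic) form $q_X$ on the $\mathbb Q$-vector space of $\mathbb Q$-Weil divisors (or on $\mathrm{Cl}(X)\otimes\mathbb Q$) which is an intersection product, i.e. $q_X(D,D')\ge 0$ for any two distinct prime Weil divisors $D\neq D'$. Then every effective $\mathbb Q$-Weil divisor $D$ on $X$ has a unique rational $q_X$-Zariski decomposition: there is a unique way to write $D=P(D)+N(D)$ with $P(D),N(D)$ effective $\mathbb Q$-Weil divisors such that (1) $P(D)$ is $q_X$-nef, (2) $N(D)$ is $q_X$-exceptional or zero, and (3) $q_X(P(D),N(D))=0$. No assumption on the signature of $q_X$ is needed.
   Context: A prime divisor is a reduced irreducible effective divisor. A $\mathbb Q$-Weil divisor $P$ is $q_X$-nef if $q_X(P,E)\ge0$ for every effective Weil divisor $E$ (equivalently every prime Weil divisor $E$). An effective $\mathbb Q$-Weil divisor $E=\sum a_iE_i$ (with $E_i$ its distinct prime components) is $q_X$-exceptional if the Gram matrix $(q_X(E_i,E_j))_{i,j}$ is negative definite. *)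

theory Defs
  imports Complex_Main
begin

text \<open>The prime Weil divisors of X are the elements of a type 'p.
  A Q-Weil divisor is a finitely supported function 'p => rat (coefficients).\<close>

definition qdivs :: "('p \<Rightarrow> rat) set" where
  "qdivs = {D. finite {p. D p \<noteq> 0}}"

definition supp_div :: "('p \<Rightarrow> rat) \<Rightarrow> 'p set" where
  "supp_div D = {p. D p \<noteq> 0}"

definition prime_div :: "'p \<Rightarrow> ('p \<Rightarrow> rat)" where
  "prime_div p = (\<lambda>x. if x = p then 1 else 0)"

definition effective :: "('p \<Rightarrow> rat) \<Rightarrow> bool" where
  "effective D \<longleftrightarrow> D \<in> qdivs \<and> (\<forall>p. D p \<ge> 0)"

definition sym_bilinear :: "(('p \<Rightarrow> rat) \<Rightarrow> ('p \<Rightarrow> rat) \<Rightarrow> rat) \<Rightarrow> bool" where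
  "sym_bilinear q \<longleftrightarrow>
     (\<forall>D\<in>qdivs. \<forall>E\<in>qdivs. q D E = q E D) \<and>
     (\<forall>a D D' E. D \<in> qdivs \<longrightarrow> D' \<in> qdivs \<longrightarrow> E \<in> qdivs \<longrightarrow>
        q (\<lambda>x. a * D x + D' x) E = a * q D E + q D' E)"

definition intersection_product :: "(('p \<Rightarrow> rat) \<Rightarrow> ('p \<Rightarrow> rat) \<Rightarrow> rat) \<Rightarrow> bool" where
  "intersection_product q \<longleftrightarrow>
     (\<forall>D D'. D \<noteq> D' \<longrightarrow> q (prime_div D) (prime_div D') \<ge> 0)"

definition q_nef :: "(('p \<Rightarrow> rat) \<Rightarrow> ('p \<Rightarrow> rat) \<Rightarrow> rat) \<Rightarrow> ('p \<Rightarrow> rat) \<Rightarrow> bool" where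
  "q_nef q P \<longleftrightarrow>
     (\<forall>E. effective E \<and> (\<forall>p. E p \<in> \<int>) \<longrightarrow> q P E \<ge> 0)"

definition q_exceptional :: "(('p \<Rightarrow> rat) \<Rightarrow> ('p \<Rightarrow> rat) \<Rightarrow> rat) \<Rightarrow> ('p \<Rightarrow> rat) \<Rightarrow> bool" where
  "q_exceptional q E \<longleftrightarrow> effective E \<and>
     (\<forall>c :: 'p \<Rightarrow> real. (\<exists>i\<in>supp_div E. c i \<noteq> 0) \<longrightarrow>
        (\<Sum>i\<in>supp_div E. \<Sum>j\<in>supp_div E.
            c i * c j * real_of_rat (q (prime_div i) (prime_div j))) < 0)"

end

theory Submission
  imports Defs
begin

text \<open>
  Everything happens on the finite support \<open>S\<close> of \<open>D\<close>, where \<open>q\<close> is encoded by its Gram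
  matrix \<open>G\<close> on prime divisors: \<open>G\<close> is symmetric and, \<open>q\<close> being an intersection
  product, has nonnegative off-diagonal entries. For such a matrix and a finite index set
  \<open>T\<close>, eliminating one index at a time by Schur complements shows that either some nonzero
  \<open>y \<ge> 0\<close> satisfies \<open>(G y)\<^sub>i \<ge> 0\<close> wherever \<open>y\<^sub>i > 0\<close>, or \<open>G\<close> is negative definite and
  invertible on \<open>T\<close>, and then \<open>-G\<^sup>-\<^sup>1 \<ge> 0\<close> there.

  Starting from \<open>P = 0\<close> we enlarge a nef \<open>P \<le> D\<close> so that \<open>T = {P < D}\<close> shrinks: in the
  first case \<open>P\<close> moves along \<open>y\<close>, in the second \<open>P\<close> is replaced on \<open>T\<close> by the solution
  of \<open>G P = 0\<close> on \<open>T\<close>, cut back to \<open>D\<close> if it overshoots. When the second case occurs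
  without overshooting, \<open>N = D - P\<close> lives on \<open>T\<close>, where \<open>G\<close> is negative definite, and
  \<open>q(P, N) = 0\<close>. For uniqueness, the positive part of \<open>P\<^sub>1 - P\<^sub>2\<close> is supported in
  \<open>supp N\<^sub>2\<close> and pairs nonnegatively with itself, contradicting negative definiteness.
\<close>

lemma sym_bilinear_commute:
  assumes "sym_bilinear q" "D \<in> qdivs" "E \<in> qdivs"
  shows "q D E = q E D"
  using assms unfolding sym_bilinear_def by blast

lemma sym_bilinear_left:
  assumes "sym_bilinear q" "D \<in> qdivs" "D' \<in> qdivs" "E \<in> qdivs"
  shows "q (\<lambda>x. a * D x + D' x) E = a * q D E + q D' E"
  using assms unfolding sym_bilinear_def by blast

lemma zero_in_qdivs: "(\<lambda>_. 0) \<in> qdivs"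
  by (simp add: qdivs_def)

lemma prime_div_in_qdivs: "prime_div p \<in> qdivs"
  by (simp add: qdivs_def prime_div_def)

lemma qdivs_if_supp_div_subset:
  assumes "finite S" "supp_div X \<subseteq> S"
  shows "X \<in> qdivs"
  using assms finite_subset unfolding qdivs_def supp_div_def by blast

lemma sym_bilinear_zero_left:
  assumes "sym_bilinear q" "E \<in> qdivs"
  shows "q (\<lambda>_. 0) E = 0"
  using sym_bilinear_left[OF assms(1) zero_in_qdivs zero_in_qdivs assms(2), of 1] by simp

lemma sym_bilinear_expand_left:
  assumes q: "sym_bilinear q" and E: "E \<in> qdivs" and S: "finite S"
    and X: "supp_div X \<subseteq> S"
  shows "q X E = (\<Sum>j\<in>S. X j * q (prime_div j) E)"
  using S X
proof (induction S arbitrary: X rule: finite_induct)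
  case empty
  then have "X = (\<lambda>_. 0)"
    by (auto simp: supp_div_def)
  then show ?case using sym_bilinear_zero_left[OF q E] by simp
next
  case (insert s F)
  define X' where "X' = X(s := 0)"
  have X'_supp: "supp_div X' \<subseteq> F"
    using insert.prems by (auto simp: X'_def supp_div_def)
  have X'_qdiv: "X' \<in> qdivs"
    using insert.hyps(1) X'_supp by (rule qdivs_if_supp_div_subset)
  have "X = (\<lambda>x. X s * prime_div s x + X' x)"
    by (auto simp: X'_def prime_div_def)
  then have "q X E = X s * q (prime_div s) E + q X' E"
    using sym_bilinear_left[OF q prime_div_in_qdivs X'_qdiv E] by metis
  also have "q X' E = (\<Sum>j\<in>F. X' j * q (prime_div j) E)"
    using X'_supp by (rule insert.IH)
  also have "\<dots> = (\<Sum>j\<in>F. X j * q (prime_div j) E)"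
    using insert.hyps(2) by (intro sum.cong) (auto simp: X'_def)
  finally show ?case
    using insert.hyps by simp
qed

lemma sym_bilinear_expand_right:
  assumes q: "sym_bilinear q" and X: "X \<in> qdivs" and S: "finite S"
    and E: "supp_div E \<subseteq> S"
  shows "q X E = (\<Sum>j\<in>S. E j * q X (prime_div j))"
proof -
  have E_qdiv: "E \<in> qdivs"
    using S E by (rule qdivs_if_supp_div_subset)
  have "q X E = q E X"
    using q X E_qdiv by (rule sym_bilinear_commute)
  also have "\<dots> = (\<Sum>j\<in>S. E j * q (prime_div j) X)"
    using q X S E by (rule sym_bilinear_expand_left)
  finally show ?thesis
    using sym_bilinear_commute[OF q prime_div_in_qdivs X] by simp
qed

definition gram :: "(('p \<Rightarrow> rat) \<Rightarrow> ('p \<Rightarrow> rat) \<Rightarrow> rat) \<Rightarrow> 'p \<Rightarrow> 'p \<Rightarrow> rat" where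
  "gram q i j = q (prime_div i) (prime_div j)"

lemma sym_bilinear_prime_div_right:
  assumes q: "sym_bilinear q" and S: "finite S" and X: "supp_div X \<subseteq> S"
  shows "q X (prime_div c) = (\<Sum>j\<in>S. gram q c j * X j)"
  using sym_bilinear_expand_left[OF q prime_div_in_qdivs S X]
    sym_bilinear_commute[OF q prime_div_in_qdivs prime_div_in_qdivs]
  by (simp add: gram_def mult.commute)

section \<open>Symmetric Metzler matrices\<close>

locale sym_metzler =
  fixes G :: "'a \<Rightarrow> 'a \<Rightarrow> rat"
  assumes sym: "G i j = G j i"
    and offdiag_nonneg: "i \<noteq> j \<Longrightarrow> 0 \<le> G i j"

lemma sym_metzler_gram:
  assumes "sym_bilinear q" "intersection_product q"
  shows "sym_metzler (gram q)"
  using assms sym_bilinear_commute[OF assms(1) prime_div_in_qdivs prime_div_in_qdivs]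
  by unfold_locales (auto simp: gram_def intersection_product_def)

definition neg_definite_on :: "('a \<Rightarrow> 'a \<Rightarrow> rat) \<Rightarrow> 'a set \<Rightarrow> bool" where
  "neg_definite_on G T \<longleftrightarrow> (\<forall>c :: 'a \<Rightarrow> real. (\<exists>i\<in>T. c i \<noteq> 0) \<longrightarrow>
      (\<Sum>i\<in>T. \<Sum>j\<in>T. c i * c j * real_of_rat (G i j)) < 0)"

lemma q_exceptional_iff_neg_definite_on:
  "q_exceptional q N \<longleftrightarrow> effective N \<and> neg_definite_on (gram q) (supp_div N)"
  by (simp add: q_exceptional_def neg_definite_on_def gram_def)

definition nef_direction :: "('a \<Rightarrow> 'a \<Rightarrow> rat) \<Rightarrow> 'a set \<Rightarrow> ('a \<Rightarrow> rat) \<Rightarrow> bool" where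
  "nef_direction G T y \<longleftrightarrow> (\<forall>i. 0 \<le> y i) \<and> (\<forall>i. i \<notin> T \<longrightarrow> y i = 0) \<and> (\<exists>i\<in>T. y i \<noteq> 0) \<and>
      (\<forall>i\<in>T. 0 < y i \<longrightarrow> 0 \<le> (\<Sum>j\<in>T. G i j * y j))"

definition solvable_on :: "('a \<Rightarrow> 'a \<Rightarrow> 'b::comm_semiring_1) \<Rightarrow> 'a set \<Rightarrow> bool" where
  "solvable_on G T \<longleftrightarrow> (\<forall>r. \<exists>x. \<forall>i\<in>T. (\<Sum>j\<in>T. G i j * x j) = r i)"

definition schur_complement :: "('a \<Rightarrow> 'a \<Rightarrow> 'b::field) \<Rightarrow> 'a \<Rightarrow> 'a \<Rightarrow> 'a \<Rightarrow> 'b" where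
  "schur_complement G t i j = G i j - G i t * G t j / G t t"

lemma sum_schur_complement:
  "(\<Sum>j\<in>F. schur_complement G t i j * x j) =
     (\<Sum>j\<in>F. G i j * x j) - G i t / G t t * (\<Sum>j\<in>F. G t j * x j)"
  by (simp add: schur_complement_def algebra_simps sum_subtractf sum_distrib_left)

lemma (in sym_metzler) sym_metzler_schur_complement:
  assumes "G t t < 0"
  shows "sym_metzler (schur_complement G t)"
proof
  show "schur_complement G t i j = schur_complement G t j i" for i j
    by (simp add: schur_complement_def sym[of i j] sym[of i t] sym[of t j] mult.commute)
  show "0 \<le> schur_complement G t i j" if "i \<noteq> j" for i j
  proof (cases "i = t \<or> j = t")
    case True
    then show ?thesis
      using assms that sym by (auto simp: schur_complement_def)
  next
    case False
    then have "0 \<le> G i t * G t j"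
      using offdiag_nonneg[of i t] offdiag_nonneg[of t j] by auto
    then have "G i t * G t j / G t t \<le> 0"
      using assms by (simp add: divide_nonneg_neg)
    then show ?thesis
      using offdiag_nonneg[OF that] by (simp add: schur_complement_def)
  qed
qed

lemma (in sym_metzler) nef_direction_insert:
  assumes F: "finite F" "t \<notin> F" and Gtt: "G t t < 0"
    and y: "nef_direction (schur_complement G t) F y"
  shows "nef_direction G (insert t F) (y(t := - (\<Sum>j\<in>F. G t j * y j) / G t t))"
    (is "nef_direction G _ ?y")
proof -
  define s where "s = - (\<Sum>j\<in>F. G t j * y j) / G t t"
  have y_nonneg: "0 \<le> y i" for i
    using y by (simp add: nef_direction_def)
  have "0 \<le> (\<Sum>j\<in>F. G t j * y j)"
    using F(2) y_nonneg by (intro sum_nonneg mult_nonneg_nonneg) (auto intro!: offdiag_nonneg)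
  then have s_nonneg: "0 \<le> s"
    using Gtt by (simp add: s_def divide_nonneg_neg)
  have row: "(\<Sum>j\<in>insert t F. G i j * ?y j) = G i t * s + (\<Sum>j\<in>F. G i j * y j)" for i
  proof -
    have "(\<Sum>j\<in>F. G i j * ?y j) = (\<Sum>j\<in>F. G i j * y j)"
      using F(2) by (intro sum.cong) auto
    then show ?thesis
      using F by (simp add: s_def)
  qed
  have "0 \<le> (\<Sum>j\<in>insert t F. G i j * ?y j)" if "i \<in> insert t F" "0 < ?y i" for i
  proof (cases "i = t")
    case True
    show ?thesis
      unfolding row True s_def using Gtt by simp
  next
    case False
    have "(\<Sum>j\<in>insert t F. G i j * ?y j) = (\<Sum>j\<in>F. schur_complement G t i j * y j)"
      unfolding row sum_schur_complement s_def using Gtt by (simp add: field_simps)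
    with False that show ?thesis
      using y by (simp add: nef_direction_def)
  qed
  then show ?thesis
    using y y_nonneg s_nonneg F(2) by (auto simp: nef_direction_def s_def)
qed

lemma quad_form_insert_schur:
  fixes g :: "'a \<Rightarrow> 'a \<Rightarrow> 'b::field"
  assumes F: "finite F" "t \<notin> F" and sym: "\<And>i j. g i j = g j i" and gtt: "g t t \<noteq> 0"
  shows "(\<Sum>i\<in>insert t F. \<Sum>j\<in>insert t F. c i * c j * g i j) =
    g t t * (c t + (\<Sum>j\<in>F. g t j * c j) / g t t)\<^sup>2 +
    (\<Sum>i\<in>F. \<Sum>j\<in>F. c i * c j * schur_complement g t i j)"
proof -
  define s where "s = (\<Sum>j\<in>F. g t j * c j)"
  have col: "(\<Sum>i\<in>F. c i * g i t) = s"
    by (simp add: s_def sym[of _ t] mult.commute)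
  have "(\<Sum>i\<in>F. \<Sum>j\<in>F. c i * c j * schur_complement g t i j) =
      (\<Sum>i\<in>F. \<Sum>j\<in>F. c i * c j * g i j) - (\<Sum>i\<in>F. c i * g i t) * s / g t t"
    by (simp add: schur_complement_def s_def algebra_simps sum_subtractf sum_product
        sum_divide_distrib)
  moreover have "(\<Sum>i\<in>insert t F. \<Sum>j\<in>insert t F. c i * c j * g i j) =
      g t t * c t * c t + 2 * c t * s + (\<Sum>i\<in>F. \<Sum>j\<in>F. c i * c j * g i j)"
  proof -
    have "(\<Sum>j\<in>F. c t * c j * g t j) = c t * s"
      by (simp add: s_def sum_distrib_left algebra_simps)
    moreover have "(\<Sum>i\<in>F. c i * c t * g i t) = c t * (\<Sum>i\<in>F. c i * g i t)"
      by (simp add: sum_distrib_left algebra_simps)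
    ultimately show ?thesis
      using F col by (simp add: sum.distrib algebra_simps)
  qed
  moreover have "g t t * (c t + s / g t t)\<^sup>2 = g t t * c t * c t + 2 * c t * s + s * s / g t t"
    using gtt by (simp add: field_simps power2_eq_square)
  ultimately show ?thesis
    unfolding s_def[symmetric] col by (simp add: algebra_simps)
qed

lemma neg_definite_on_insert:
  assumes F: "finite F" "t \<notin> F" and sym: "\<And>i j. G i j = G j i" and Gtt: "G t t < 0"
    and nd: "neg_definite_on (schur_complement G t) F"
  shows "neg_definite_on G (insert t F)"
  unfolding neg_definite_on_def
proof (intro allI impI)
  fix c :: "'a \<Rightarrow> real"
  assume c: "\<exists>i\<in>insert t F. c i \<noteq> 0"
  define g where "g i j = real_of_rat (G i j)" for i j
  define s where "s = (\<Sum>j\<in>F. g t j * c j)"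
  have gtt: "g t t < 0"
    using Gtt by (simp add: g_def)
  define Q where "Q = (\<Sum>i\<in>F. \<Sum>j\<in>F. c i * c j * real_of_rat (schur_complement G t i j))"
  have "(\<Sum>i\<in>insert t F. \<Sum>j\<in>insert t F. c i * c j * g i j) = g t t * (c t + s / g t t)\<^sup>2 + Q"
    using quad_form_insert_schur[OF F, of g c] sym gtt
    by (simp add: g_def s_def Q_def schur_complement_def of_rat_diff of_rat_mult of_rat_divide)
  moreover have "g t t * (c t + s / g t t)\<^sup>2 \<le> 0"
    using gtt by (simp add: mult_nonpos_nonneg)
  moreover have "g t t * (c t + s / g t t)\<^sup>2 < 0 \<and> Q = 0 \<or> Q < 0"
  proof (cases "\<exists>i\<in>F. c i \<noteq> 0")
    case True
    then show ?thesis
      using nd by (simp add: neg_definite_on_def Q_def)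
  next
    case False
    then have "s = 0" "c t \<noteq> 0" "Q = 0"
      using c by (auto simp: s_def Q_def)
    then show ?thesis
      using gtt by (simp add: mult_neg_pos)
  qed
  ultimately have "(\<Sum>i\<in>insert t F. \<Sum>j\<in>insert t F. c i * c j * g i j) < 0"
    by linarith
  then show "(\<Sum>i\<in>insert t F. \<Sum>j\<in>insert t F. c i * c j * real_of_rat (G i j)) < 0"
    by (simp add: g_def)
qed

lemma solvable_on_insert:
  fixes G :: "'a \<Rightarrow> 'a \<Rightarrow> 'b::field"
  assumes F: "finite F" "t \<notin> F" and Gtt: "G t t \<noteq> 0"
    and solv: "solvable_on (schur_complement G t) F"
  shows "solvable_on G (insert t F)"
  unfolding solvable_on_def
proof
  fix r :: "'a \<Rightarrow> 'b"
  obtain x where x: "\<And>i. i \<in> F \<Longrightarrow>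
      (\<Sum>j\<in>F. schur_complement G t i j * x j) = r i - G i t * r t / G t t"
    using solv[unfolded solvable_on_def, THEN spec, of "\<lambda>i. r i - G i t * r t / G t t"] by blast
  define xt where "xt = (r t - (\<Sum>j\<in>F. G t j * x j)) / G t t"
  have row: "(\<Sum>j\<in>insert t F. G i j * (x(t := xt)) j) = G i t * xt + (\<Sum>j\<in>F. G i j * x j)" for i
  proof -
    have "(\<Sum>j\<in>F. G i j * (x(t := xt)) j) = (\<Sum>j\<in>F. G i j * x j)"
      using F(2) by (intro sum.cong) auto
    then show ?thesis
      using F by simp
  qed
  have "(\<Sum>j\<in>insert t F. G i j * (x(t := xt)) j) = r i" if "i \<in> insert t F" for i
  proof (cases "i = t")
    case True
    show ?thesis
      unfolding row True using Gtt by (simp add: xt_def)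
  next
    case False
    have "G i t * xt = G i t / G t t * (r t - (\<Sum>j\<in>F. G t j * x j))"
      by (simp add: xt_def)
    then have xt: "G i t * xt = G i t * r t / G t t - G i t / G t t * (\<Sum>j\<in>F. G t j * x j)"
      by (simp add: right_diff_distrib)
    have "(\<Sum>j\<in>F. G i j * x j) = r i - G i t * r t / G t t + G i t / G t t * (\<Sum>j\<in>F. G t j * x j)"
      using x[of i] False that by (simp add: sum_schur_complement diff_eq_eq)
    then show ?thesis
      unfolding row xt by simp
  qed
  then show "\<exists>x. \<forall>i\<in>insert t F. (\<Sum>j\<in>insert t F. G i j * x j) = r i"
    by blast
qed

lemma sym_metzler_alternative:
  assumes "finite T" "sym_metzler G"
  shows "(\<exists>y. nef_direction G T y) \<or> (neg_definite_on G T \<and> solvable_on G T)"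
  using assms
proof (induction T arbitrary: G rule: finite_induct)
  case empty
  then show ?case
    by (simp add: neg_definite_on_def solvable_on_def)
next
  case (insert t F)
  interpret sym_metzler G
    by (fact insert.prems)
  show ?case
  proof (cases "G t t < 0")
    case False
    define y where "y i = (if i = t then 1 else 0 :: rat)" for i
    have "(\<Sum>j\<in>insert t F. G i j * y j) = G i t" for i
      using insert.hyps by (simp add: y_def if_distrib sum.If_cases)
    then have "nef_direction G (insert t F) y"
      using False by (auto simp: nef_direction_def y_def)
    then show ?thesis
      by blast
  next
    case True
    from insert.IH[OF sym_metzler_schur_complement[OF True]]
    show ?thesis
    proof
      assume "\<exists>y. nef_direction (schur_complement G t) F y"
      then show ?thesis
        using nef_direction_insert[OF insert.hyps True] by blast
    next
      assume "neg_definite_on (schur_complement G t) F \<and> solvable_on (schur_complement G t) F"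
      then show ?thesis
        using neg_definite_on_insert[of F t G, OF insert.hyps sym True]
          solvable_on_insert[of F t G, OF insert.hyps] True by simp
    qed
  qed
qed

lemma neg_definite_on_subset:
  assumes "finite T" "T' \<subseteq> T" "neg_definite_on G T"
  shows "neg_definite_on G T'"
  unfolding neg_definite_on_def
proof (intro allI impI)
  fix c :: "'a \<Rightarrow> real"
  assume "\<exists>i\<in>T'. c i \<noteq> 0"
  define c' where "c' i = (if i \<in> T' then c i else 0)" for i
  have "\<exists>i\<in>T. c' i \<noteq> 0"
    using \<open>\<exists>i\<in>T'. c i \<noteq> 0\<close> assms(2) by (auto simp: c'_def)
  then have "(\<Sum>i\<in>T. \<Sum>j\<in>T. c' i * c' j * real_of_rat (G i j)) < 0"
    using assms(3) by (simp add: neg_definite_on_def)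
  moreover have "(\<Sum>i\<in>T. \<Sum>j\<in>T. c' i * c' j * real_of_rat (G i j)) =
      (\<Sum>i\<in>T'. \<Sum>j\<in>T'. c' i * c' j * real_of_rat (G i j))"
    using assms(1,2)
    by (intro sum.mono_neutral_right sum.mono_neutral_cong_right) (auto simp: c'_def)
  moreover have "\<dots> = (\<Sum>i\<in>T'. \<Sum>j\<in>T'. c i * c j * real_of_rat (G i j))"
    by (simp add: c'_def)
  ultimately show "(\<Sum>i\<in>T'. \<Sum>j\<in>T'. c i * c j * real_of_rat (G i j)) < 0"
    by simp
qed

lemma neg_definite_on_rat:
  assumes "neg_definite_on G T" "\<exists>i\<in>T. m i \<noteq> 0"
  shows "(\<Sum>i\<in>T. \<Sum>j\<in>T. m i * m j * G i j) < 0"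
proof -
  have "(\<Sum>i\<in>T. \<Sum>j\<in>T. real_of_rat (m i) * real_of_rat (m j) * real_of_rat (G i j)) < 0"
    using assms unfolding neg_definite_on_def by simp
  then show ?thesis
    by (simp flip: of_rat_mult of_rat_sum)
qed

lemma (in sym_metzler) neg_definite_on_inverse_nonneg:
  assumes nd: "neg_definite_on G T"
    and z: "\<And>i. i \<in> T \<Longrightarrow> (\<Sum>j\<in>T. G i j * z j) \<le> 0"
    and i: "i \<in> T"
  shows "0 \<le> z i"
proof (rule ccontr)
  assume "\<not> 0 \<le> z i"
  define m where "m j = (if z j < 0 then - z j else 0)" for j
  define p where "p j = (if z j < 0 then 0 else z j)" for j
  have z_split: "z j = p j - m j" for j
    by (simp add: m_def p_def)
  have "(\<Sum>k\<in>T. m k * (\<Sum>j\<in>T. G k j * z j)) \<le> 0"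
    using z by (intro sum_nonpos) (simp add: m_def mult_nonneg_nonpos)
  moreover have "(\<Sum>k\<in>T. m k * (\<Sum>j\<in>T. G k j * z j)) =
      (\<Sum>k\<in>T. \<Sum>j\<in>T. m k * G k j * p j) - (\<Sum>k\<in>T. \<Sum>j\<in>T. m k * m j * G k j)"
    by (simp add: z_split sum_distrib_left sum_subtractf[symmetric] algebra_simps)
  moreover have "0 \<le> m k * G k j * p j" for k j
    using offdiag_nonneg[of k j] by (cases "k = j") (auto simp: m_def p_def)
  then have "0 \<le> (\<Sum>k\<in>T. \<Sum>j\<in>T. m k * G k j * p j)"
    by (intro sum_nonneg)
  moreover have "(\<Sum>k\<in>T. \<Sum>j\<in>T. m k * m j * G k j) < 0"
    using \<open>\<not> 0 \<le> z i\<close> i by (intro neg_definite_on_rat[OF nd]) (force simp: m_def)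
  ultimately show False
    by linarith
qed

section \<open>Existence by descent\<close>

definition nef_on :: "'a set \<Rightarrow> ('a \<Rightarrow> 'a \<Rightarrow> rat) \<Rightarrow> ('a \<Rightarrow> rat) \<Rightarrow> bool" where
  "nef_on S G P \<longleftrightarrow> (\<forall>c. 0 \<le> (\<Sum>j\<in>S. G c j * P j))"

definition nef_below :: "'a set \<Rightarrow> ('a \<Rightarrow> 'a \<Rightarrow> rat) \<Rightarrow> ('a \<Rightarrow> rat) \<Rightarrow> ('a \<Rightarrow> rat) \<Rightarrow> bool" where
  "nef_below S G D P \<longleftrightarrow> (\<forall>i. 0 \<le> P i \<and> P i \<le> D i) \<and> nef_on S G P"

text \<open>Coordinate form of \<open>D = P + (D - P)\<close>: the negative part \<open>D - P\<close> is supported on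
  \<open>{i. P i < D i}\<close>.\<close>

definition zariski_on :: "'a set \<Rightarrow> ('a \<Rightarrow> 'a \<Rightarrow> rat) \<Rightarrow> ('a \<Rightarrow> rat) \<Rightarrow> ('a \<Rightarrow> rat) \<Rightarrow> bool" where
  "zariski_on S G D P \<longleftrightarrow> nef_below S G D P \<and>
     (\<forall>c. P c < D c \<longrightarrow> (\<Sum>j\<in>S. G c j * P j) = 0) \<and> neg_definite_on G {i. P i < D i}"

lemma largest_feasible_step:
  fixes P D z :: "'a \<Rightarrow> 'b::linordered_field"
  assumes fin: "finite {i. P i < D i}" and P: "\<And>i. 0 \<le> P i \<and> P i \<le> D i"
    and z: "\<And>i. 0 \<le> z i" "\<And>i. 0 < z i \<Longrightarrow> P i < D i" and nz: "\<exists>i. 0 < z i"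
  shows "\<exists>mu\<ge>0. (\<forall>i. 0 \<le> P i + mu * z i \<and> P i + mu * z i \<le> D i) \<and>
    {i. P i + mu * z i < D i} \<subset> {i. P i < D i}"
proof -
  define Z where "Z = {i. 0 < z i}"
  define ratio where "ratio i = (D i - P i) / z i" for i
  define mu where "mu = Min (ratio ` Z)"
  have Z_sub: "Z \<subseteq> {i. P i < D i}"
    using z(2) by (auto simp: Z_def)
  have Z: "finite Z" "Z \<noteq> {}"
    using finite_subset[OF Z_sub fin] nz by (auto simp: Z_def)
  have "mu \<in> ratio ` Z"
    unfolding mu_def using Z by (intro Min_in) auto
  then obtain i0 where i0: "i0 \<in> Z" "mu = ratio i0"
    by blast
  have step: "mu * z i \<le> D i - P i" if "i \<in> Z" for i
  proof -
    have "mu \<le> ratio i"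
      unfolding mu_def using Z that by (intro Min_le) auto
    then show ?thesis
      using that by (simp add: ratio_def Z_def pos_le_divide_eq)
  qed
  have mu_nonneg: "0 \<le> mu"
    using i0 P[of i0] by (simp add: ratio_def Z_def)
  have "0 \<le> P i + mu * z i \<and> P i + mu * z i \<le> D i" for i
    using step[of i] P[of i] z(1)[of i] mu_nonneg by (cases "i \<in> Z") (auto simp: Z_def)
  moreover have "{i. P i + mu * z i < D i} \<subset> {i. P i < D i}"
  proof
    show "{i. P i + mu * z i < D i} \<subseteq> {i. P i < D i}"
    proof
      fix i
      assume "i \<in> {i. P i + mu * z i < D i}"
      moreover have "0 \<le> mu * z i"
        using mu_nonneg z(1)[of i] by simp
      ultimately show "i \<in> {i. P i < D i}"
        by simp
    qed
    have "P i0 + mu * z i0 = D i0"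
      using i0 by (simp add: ratio_def Z_def)
    then have "i0 \<notin> {i. P i + mu * z i < D i}"
      by simp
    moreover have "i0 \<in> {i. P i < D i}"
      using i0(1) Z_sub by blast
    ultimately show "{i. P i + mu * z i < D i} \<noteq> {i. P i < D i}"
      by blast
  qed
  ultimately show ?thesis
    using mu_nonneg by blast
qed

lemma nef_below_gap_subset:
  assumes "supp_div D \<subseteq> S" "nef_below S G D P"
  shows "{i. P i < D i} \<subseteq> S"
proof
  fix i
  assume "i \<in> {i. P i < D i}"
  moreover have "0 \<le> P i"
    using assms(2) by (simp add: nef_below_def)
  ultimately have "i \<in> supp_div D"
    by (simp add: supp_div_def)
  then show "i \<in> S"
    using assms(1) by blast
qed

lemma (in sym_metzler) nef_direction_nonneg:
  assumes S: "finite S" "T \<subseteq> S" and y: "nef_direction G T y"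
  shows "0 \<le> (\<Sum>j\<in>S. G c j * y j)"
proof (cases "0 < y c")
  case True
  have "(\<Sum>j\<in>S. G c j * y j) = (\<Sum>j\<in>T. G c j * y j)"
    using S y by (intro sum.mono_neutral_right) (auto simp: nef_direction_def)
  moreover have "c \<in> T"
    using True y by (auto simp: nef_direction_def)
  ultimately show ?thesis
    using True y by (simp add: nef_direction_def)
next
  case False
  then have "y c = 0"
    using y by (metis nef_direction_def order_neq_le_trans)
  then have "0 \<le> G c j * y j" for j
    using y offdiag_nonneg[of c j] by (cases "j = c") (auto simp: nef_direction_def)
  then show ?thesis
    by (simp add: sum_nonneg)
qed

lemma (in sym_metzler) nef_below_step_direction:
  assumes S: "finite S" and D: "supp_div D \<subseteq> S" and P: "nef_below S G D P"
    and y: "nef_direction G {i. P i < D i} y"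
  obtains P1 where "nef_below S G D P1" "{i. P1 i < D i} \<subset> {i. P i < D i}"
proof -
  have T: "{i. P i < D i} \<subseteq> S"
    using D P by (rule nef_below_gap_subset)
  have "finite {i. P i < D i}"
    using T S by (rule finite_subset)
  moreover have "0 \<le> P i \<and> P i \<le> D i" for i
    using P by (simp add: nef_below_def)
  moreover have "0 \<le> y i" "0 < y i \<Longrightarrow> P i < D i" for i
    using y by (auto simp: nef_direction_def)
  moreover have "\<exists>i. 0 < y i"
    using y unfolding nef_direction_def by (metis order_neq_le_trans)
  ultimately obtain mu where mu: "0 \<le> mu" "\<And>i. 0 \<le> P i + mu * y i \<and> P i + mu * y i \<le> D i"
    "{i. P i + mu * y i < D i} \<subset> {i. P i < D i}"
    using largest_feasible_step[of P D y] by blast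
  have "nef_on S G (\<lambda>i. P i + mu * y i)"
    unfolding nef_on_def
  proof
    fix c
    have "(\<Sum>j\<in>S. G c j * (P j + mu * y j)) = (\<Sum>j\<in>S. G c j * P j) + mu * (\<Sum>j\<in>S. G c j * y j)"
      by (simp add: algebra_simps sum.distrib sum_distrib_left)
    then show "0 \<le> (\<Sum>j\<in>S. G c j * (P j + mu * y j))"
      using P nef_direction_nonneg[OF S T y] mu(1) by (simp add: nef_below_def nef_on_def)
  qed
  then show ?thesis
    using mu by (intro that[of "\<lambda>i. P i + mu * y i"]) (auto simp: nef_below_def)
qed

text \<open>Since \<open>P\<close> is nef, \<open>G (P' - P) \<le> 0\<close> on
  \<open>T\<close>, so \<open>P' \<ge> P\<close> by inverse positivity, and off \<open>T\<close> the increase only helps.\<close>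

lemma (in sym_metzler) nef_extension_above:
  assumes S: "finite S" and T: "T \<subseteq> S" and P: "nef_on S G P"
    and nd: "neg_definite_on G T" and solv: "solvable_on G T"
  obtains P' where "\<And>i. i \<notin> T \<Longrightarrow> P' i = P i" "\<And>i. P i \<le> P' i" "nef_on S G P'"
    "\<And>c. c \<in> T \<Longrightarrow> (\<Sum>j\<in>S. G c j * P' j) = 0"
proof -
  obtain x where x: "\<And>i. i \<in> T \<Longrightarrow> (\<Sum>j\<in>T. G i j * x j) = - (\<Sum>j\<in>S - T. G i j * P j)"
    using solv[unfolded solvable_on_def, THEN spec, of "\<lambda>i. - (\<Sum>j\<in>S - T. G i j * P j)"]
    by blast
  define P' where "P' i = (if i \<in> T then x i else P i)" for i
  define z where "z i = P' i - P i" for i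
  have split: "(\<Sum>j\<in>S. f j) = (\<Sum>j\<in>S - T. f j) + (\<Sum>j\<in>T. f j)" for f :: "'a \<Rightarrow> rat"
    using sum.subset_diff[OF T S] .
  have harmonic: "(\<Sum>j\<in>S. G c j * P' j) = 0" if "c \<in> T" for c
    using x[OF that] by (simp add: split P'_def)
  have row: "(\<Sum>j\<in>S. G c j * P' j) = (\<Sum>j\<in>S. G c j * P j) + (\<Sum>j\<in>T. G c j * z j)" for c
  proof -
    have "(\<Sum>j\<in>S. G c j * z j) = (\<Sum>j\<in>T. G c j * z j)"
      using S T by (intro sum.mono_neutral_right) (auto simp: z_def P'_def)
    then show ?thesis
      by (simp add: z_def algebra_simps sum_subtractf)
  qed
  have z_nonneg: "0 \<le> z i" for i
  proof (cases "i \<in> T")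
    case True
    have "(\<Sum>j\<in>T. G c j * z j) \<le> 0" if "c \<in> T" for c
      using row[of c] harmonic[OF that] P[unfolded nef_on_def, rule_format, of c] by linarith
    then show ?thesis
      using neg_definite_on_inverse_nonneg[OF nd _ True] by blast
  next
    case False
    then show ?thesis
      by (simp add: z_def P'_def)
  qed
  have "nef_on S G P'"
    unfolding nef_on_def
  proof
    fix c
    show "0 \<le> (\<Sum>j\<in>S. G c j * P' j)"
    proof (cases "c \<in> T")
      case True
      then show ?thesis
        by (simp add: harmonic)
    next
      case False
      then have "0 \<le> (\<Sum>j\<in>T. G c j * z j)"
        using z_nonneg by (intro sum_nonneg mult_nonneg_nonneg) (auto intro!: offdiag_nonneg)
      then show ?thesis
        using row[of c] P by (simp add: nef_on_def add_nonneg_nonneg)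
    qed
  qed
  moreover have "P i \<le> P' i" for i
    using z_nonneg[of i] by (simp add: z_def)
  ultimately show ?thesis
    using harmonic by (intro that[of P']) (auto simp: P'_def)
qed

lemma nef_below_step_towards:
  assumes fin: "finite {i. P i < D i}" and P: "nef_below S G D P" and P': "nef_on S G P'"
    and P'_ge: "\<And>i. P i \<le> P' i" and P'_gap: "\<And>i. P i < P' i \<Longrightarrow> P i < D i"
    and k: "D k < P' k"
  shows "\<exists>P1. nef_below S G D P1 \<and> {i. P1 i < D i} \<subset> {i. P i < D i}"
proof -
  define z where "z i = P' i - P i" for i
  have P_bounds: "0 \<le> P i \<and> P i \<le> D i" for i
    using P by (simp add: nef_below_def)
  have "0 \<le> z i" "0 < z i \<Longrightarrow> P i < D i" for i
    using P'_ge[of i] P'_gap[of i] by (auto simp: z_def)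
  moreover have "\<exists>i. 0 < z i"
    using k P_bounds[of k] by (auto simp: z_def intro!: exI[of _ k])
  ultimately obtain mu where mu: "0 \<le> mu" "\<And>i. 0 \<le> P i + mu * z i \<and> P i + mu * z i \<le> D i"
    "{i. P i + mu * z i < D i} \<subset> {i. P i < D i}"
    using largest_feasible_step[of P D z] fin P_bounds by blast
  have "mu * z k < 1 * z k"
    using mu(2)[of k] k by (simp add: z_def)
  then have "mu < 1"
    using k P_bounds[of k] by (simp add: z_def mult_less_cancel_right)
  have "nef_on S G (\<lambda>i. P i + mu * z i)"
    unfolding nef_on_def
  proof
    fix c
    have "(\<Sum>j\<in>S. G c j * (P j + mu * z j)) =
        (1 - mu) * (\<Sum>j\<in>S. G c j * P j) + mu * (\<Sum>j\<in>S. G c j * P' j)"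
      by (simp add: z_def algebra_simps sum.distrib sum_distrib_left sum_subtractf)
    then show "0 \<le> (\<Sum>j\<in>S. G c j * (P j + mu * z j))"
      using P P' mu(1) \<open>mu < 1\<close> by (simp add: nef_below_def nef_on_def)
  qed
  then have "nef_below S G D (\<lambda>i. P i + mu * z i)"
    using mu(2) by (simp add: nef_below_def)
  then show ?thesis
    using mu(3) by blast
qed

lemma (in sym_metzler) nef_below_step_definite:
  assumes S: "finite S" and D: "supp_div D \<subseteq> S" and P: "nef_below S G D P"
    and nd: "neg_definite_on G {i. P i < D i}" and solv: "solvable_on G {i. P i < D i}"
  shows "(\<exists>P'. zariski_on S G D P') \<or>
    (\<exists>P1. nef_below S G D P1 \<and> {i. P1 i < D i} \<subset> {i. P i < D i})"
proof -
  let ?T = "{i. P i < D i}"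
  have T: "?T \<subseteq> S"
    using D P by (rule nef_below_gap_subset)
  have finT: "finite ?T"
    using T S by (rule finite_subset)
  have P_bounds: "0 \<le> P i \<and> P i \<le> D i" for i
    using P by (simp add: nef_below_def)
  have P_nef: "nef_on S G P"
    using P by (simp add: nef_below_def)
  obtain P' where P'_out: "\<And>i. i \<notin> ?T \<Longrightarrow> P' i = P i" and P'_ge: "\<And>i. P i \<le> P' i"
    and P'_nef: "nef_on S G P'" and P'_harmonic: "\<And>c. c \<in> ?T \<Longrightarrow> (\<Sum>j\<in>S. G c j * P' j) = 0"
    using nef_extension_above[OF S T P_nef nd solv] by blast
  show ?thesis
  proof (cases "\<forall>i. P' i \<le> D i")
    case True
    have gap: "{i. P' i < D i} \<subseteq> ?T"
      using P'_out by fastforce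
    have "0 \<le> P' i" for i
      using P'_ge[of i] P_bounds[of i] by linarith
    then have "nef_below S G D P'"
      using True P'_nef by (simp add: nef_below_def)
    moreover have "(\<Sum>j\<in>S. G c j * P' j) = 0" if "P' c < D c" for c
      using gap that P'_harmonic by blast
    ultimately have "zariski_on S G D P'"
      using neg_definite_on_subset[OF finT gap nd] by (simp add: zariski_on_def)
    then show ?thesis
      by blast
  next
    case False
    then obtain k where "D k < P' k"
      by (auto simp: not_le)
    moreover have "P i < D i" if "P i < P' i" for i
      using that P'_out[of i] by force
    ultimately show ?thesis
      using nef_below_step_towards[OF finT P P'_nef P'_ge] by blast
  qed
qed

lemma (in sym_metzler) zariski_on_exists_above:
  assumes S: "finite S" and D: "supp_div D \<subseteq> S" and P: "nef_below S G D P"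
  shows "\<exists>P'. zariski_on S G D P'"
  using P
proof (induction "card {i. P i < D i}" arbitrary: P rule: less_induct)
  case less
  have finT: "finite {i. P i < D i}"
    using nef_below_gap_subset[OF D less.prems] S by (rule finite_subset)
  have smaller: "\<exists>P'. zariski_on S G D P'"
    if "nef_below S G D P1" "{i. P1 i < D i} \<subset> {i. P i < D i}" for P1
    using less.hyps[OF psubset_card_mono[OF finT that(2)] that(1)] .
  from sym_metzler_alternative[OF finT sym_metzler_axioms] show ?case
  proof
    assume "\<exists>y. nef_direction G {i. P i < D i} y"
    then show ?case
      using nef_below_step_direction[OF S D less.prems] smaller by metis
  next
    assume "neg_definite_on G {i. P i < D i} \<and> solvable_on G {i. P i < D i}"
    then show ?case
      using nef_below_step_definite[OF S D less.prems] smaller by blast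
  qed
qed

section \<open>Uniqueness\<close>

lemma (in sym_metzler) positive_part_row_nonneg:
  assumes P1: "nef_on S G P1" and P2: "(\<Sum>j\<in>S. G k j * P2 j) = 0" and k: "P2 k < P1 k"
  shows "0 \<le> (\<Sum>j\<in>S. G k j * max 0 (P1 j - P2 j))"
proof -
  have "(\<Sum>j\<in>S. G k j * max 0 (P1 j - P2 j)) =
      (\<Sum>j\<in>S. G k j * (P1 j - P2 j + max 0 (P2 j - P1 j)))"
    by (intro sum.cong) (auto simp: max_def)
  also have "\<dots> =
      (\<Sum>j\<in>S. G k j * P1 j) - (\<Sum>j\<in>S. G k j * P2 j) + (\<Sum>j\<in>S. G k j * max 0 (P2 j - P1 j))"
    by (simp add: algebra_simps sum.distrib sum_subtractf)
  finally have split: "(\<Sum>j\<in>S. G k j * max 0 (P1 j - P2 j)) =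
      (\<Sum>j\<in>S. G k j * P1 j) - (\<Sum>j\<in>S. G k j * P2 j) + (\<Sum>j\<in>S. G k j * max 0 (P2 j - P1 j))" .
  have "0 \<le> G k j * max 0 (P2 j - P1 j)" for j
    using k offdiag_nonneg[of k j] by (cases "j = k") auto
  then have "0 \<le> (\<Sum>j\<in>S. G k j * max 0 (P2 j - P1 j))"
    by (simp add: sum_nonneg)
  moreover have "0 \<le> (\<Sum>j\<in>S. G k j * P1 j)"
    using P1 by (simp add: nef_on_def)
  ultimately show ?thesis
    unfolding split using P2 by linarith
qed

lemma (in sym_metzler) zariski_on_le:
  assumes S: "finite S" and D: "supp_div D \<subseteq> S"
    and P1: "zariski_on S G D P1" and P2: "zariski_on S G D P2"
  shows "P1 i \<le> P2 i"
proof (rule ccontr)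
  assume "\<not> P1 i \<le> P2 i"
  define U where "U = {i. P2 i < D i}"
  define m where "m j = max 0 (P1 j - P2 j)" for j
  have P1_below: "P1 j \<le> D j" for j
    using P1 by (simp add: zariski_on_def nef_below_def)
  have "nef_below S G D P2"
    using P2 by (simp add: zariski_on_def)
  with D have U: "U \<subseteq> S"
    unfolding U_def by (rule nef_below_gap_subset)
  have m_U: "m j = 0" if "j \<notin> U" for j
    using that P1_below[of j] by (auto simp: m_def U_def)
  have "(\<Sum>k\<in>U. \<Sum>j\<in>U. m k * m j * G k j) < 0"
  proof (rule neg_definite_on_rat)
    show "neg_definite_on G U"
      using P2 by (simp add: zariski_on_def U_def)
    show "\<exists>k\<in>U. m k \<noteq> 0"
      using \<open>\<not> P1 i \<le> P2 i\<close> m_U[of i] by (force simp: m_def)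
  qed
  moreover have "0 \<le> m k * (\<Sum>j\<in>U. G k j * m j)" if "k \<in> U" for k
  proof (cases "P2 k < P1 k")
    case True
    have "(\<Sum>j\<in>U. G k j * m j) = (\<Sum>j\<in>S. G k j * m j)"
      using S U m_U by (intro sum.mono_neutral_left) auto
    moreover have "(\<Sum>j\<in>S. G k j * P2 j) = 0"
      using P2 that by (simp add: zariski_on_def U_def)
    ultimately have "0 \<le> (\<Sum>j\<in>U. G k j * m j)"
      using positive_part_row_nonneg[of S P1 k P2] P1 True
      by (simp add: zariski_on_def nef_below_def m_def)
    then show ?thesis
      by (simp add: m_def)
  next
    case False
    then show ?thesis
      by (simp add: m_def)
  qed
  then have "0 \<le> (\<Sum>k\<in>U. \<Sum>j\<in>U. m k * m j * G k j)"
    by (simp add: sum_nonneg sum_distrib_left algebra_simps)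
  ultimately show False
    by linarith
qed

lemma (in sym_metzler) zariski_on_unique:
  assumes "finite S" "supp_div D \<subseteq> S" "zariski_on S G D P1" "zariski_on S G D P2"
  shows "P1 = P2"
  using zariski_on_le[OF assms] zariski_on_le[OF assms(1,2,4,3)] by (simp add: antisym ext)

lemma (in sym_metzler) zariski_on_exists:
  assumes "finite S" "supp_div D \<subseteq> S" "\<And>i. 0 \<le> D i"
  shows "\<exists>P. zariski_on S G D P"
proof (rule zariski_on_exists_above[OF assms(1,2)])
  show "nef_below S G D (\<lambda>_. 0)"
    using assms(3) by (simp add: nef_below_def nef_on_def)
qed

definition q_zariski_decomp ::
  "(('p \<Rightarrow> rat) \<Rightarrow> ('p \<Rightarrow> rat) \<Rightarrow> rat) \<Rightarrow> ('p \<Rightarrow> rat) \<Rightarrow> ('p \<Rightarrow> rat) \<Rightarrow> ('p \<Rightarrow> rat) \<Rightarrow> bool"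
  where "q_zariski_decomp q D P N \<longleftrightarrow> effective P \<and> effective N \<and> D = (\<lambda>x. P x + N x) \<and>
    q_nef q P \<and> (N = (\<lambda>_. 0) \<or> q_exceptional q N) \<and> q P N = 0"

lemma sym_bilinear_gram_expand:
  assumes q: "sym_bilinear q" and S: "finite S"
    and P: "supp_div P \<subseteq> S" and N: "supp_div N \<subseteq> S"
  shows "q P N = (\<Sum>c\<in>S. N c * (\<Sum>j\<in>S. gram q c j * P j))"
  using sym_bilinear_expand_right[OF q qdivs_if_supp_div_subset[OF S P] S N]
    sym_bilinear_prime_div_right[OF q S P] by simp

lemma q_nef_iff_nef_on:
  assumes q: "sym_bilinear q" and S: "finite S" and P: "supp_div P \<subseteq> S"
  shows "q_nef q P \<longleftrightarrow> nef_on S (gram q) P"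
proof
  assume nef: "q_nef q P"
  have "effective (prime_div c) \<and> (\<forall>p. prime_div c p \<in> \<int>)" for c
    using prime_div_in_qdivs[of c] by (simp add: effective_def prime_div_def)
  then have "0 \<le> q P (prime_div c)" for c
    by (rule nef[unfolded q_nef_def, rule_format])
  then show "nef_on S (gram q) P"
    using sym_bilinear_prime_div_right[OF q S P] by (simp add: nef_on_def)
next
  assume nef: "nef_on S (gram q) P"
  show "q_nef q P"
    unfolding q_nef_def
  proof (intro allI impI)
    fix E :: "'a \<Rightarrow> rat"
    assume "effective E \<and> (\<forall>p. E p \<in> \<int>)"
    then have E: "finite (supp_div E)" "\<And>p. 0 \<le> E p"
      by (auto simp: effective_def qdivs_def supp_div_def)
    have "q P E = (\<Sum>j\<in>supp_div E. E j * q P (prime_div j))"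
      using q qdivs_if_supp_div_subset[OF S P] E(1) by (rule sym_bilinear_expand_right) simp
    also have "0 \<le> \<dots>"
      using E(2) nef sym_bilinear_prime_div_right[OF q S P]
      by (intro sum_nonneg mult_nonneg_nonneg) (auto simp: nef_on_def)
    finally show "0 \<le> q P E" .
  qed
qed

lemma finite_supp_div_if_effective: "effective D \<Longrightarrow> finite (supp_div D)"
  by (simp add: effective_def qdivs_def supp_div_def)

lemma zariski_on_if_q_zariski_decomp:
  assumes q: "sym_bilinear q" and D: "effective D" and PN: "q_zariski_decomp q D P N"
  shows "zariski_on (supp_div D) (gram q) D P \<and> N = (\<lambda>x. D x - P x)"
proof -
  let ?S = "supp_div D"
  have S: "finite ?S"
    using D by (rule finite_supp_div_if_effective)
  have eff: "effective P" "effective N" and D_eq: "D = (\<lambda>x. P x + N x)" and nef: "q_nef q P"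
    and exc: "N = (\<lambda>_. 0) \<or> q_exceptional q N" and orth: "q P N = 0"
    using PN unfolding q_zariski_decomp_def by blast+
  have P_nonneg: "0 \<le> P x" and N_nonneg: "0 \<le> N x" and D_sum: "D x = P x + N x" for x
    using eff D_eq by (auto simp: effective_def)
  have P_supp: "supp_div P \<subseteq> ?S" and N_supp: "supp_div N \<subseteq> ?S"
    using D_sum P_nonneg N_nonneg by (auto simp: supp_div_def add_nonneg_eq_0_iff)
  have gap: "{i. P i < D i} = supp_div N"
    using D_sum N_nonneg by (auto simp: supp_div_def order.strict_iff_order)
  have nef_on: "nef_on ?S (gram q) P"
    using nef q_nef_iff_nef_on[OF q S P_supp] by blast
  then have terms_nonneg: "0 \<le> N c * (\<Sum>j\<in>?S. gram q c j * P j)" for c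
    using N_nonneg by (simp add: nef_on_def)
  have "(\<Sum>c\<in>?S. N c * (\<Sum>j\<in>?S. gram q c j * P j)) = 0"
    using orth sym_bilinear_gram_expand[OF q S P_supp N_supp] by simp
  then have "N c * (\<Sum>j\<in>?S. gram q c j * P j) = 0" if "c \<in> ?S" for c
    using sum_nonneg_eq_0_iff[OF S, of "\<lambda>c. N c * (\<Sum>j\<in>?S. gram q c j * P j)"] terms_nonneg that
    by simp
  then have harmonic: "(\<Sum>j\<in>?S. gram q c j * P j) = 0" if "P c < D c" for c
    using that gap N_supp by (auto simp: supp_div_def)
  have "neg_definite_on (gram q) {i. P i < D i}"
  proof (cases "N = (\<lambda>_. 0)")
    case True
    then show ?thesis
      by (simp add: gap supp_div_def neg_definite_on_def)
  next
    case False
    then show ?thesis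
      using exc by (simp add: gap q_exceptional_iff_neg_definite_on)
  qed
  moreover have "N = (\<lambda>x. D x - P x)"
    using D_sum by (simp add: algebra_simps)
  moreover have "nef_below ?S (gram q) D P"
    using nef_on P_nonneg N_nonneg D_sum by (simp add: nef_below_def add_increasing2)
  ultimately show ?thesis
    using harmonic by (simp add: zariski_on_def)
qed

lemma q_zariski_decomp_if_zariski_on:
  assumes q: "sym_bilinear q" and D: "effective D"
    and P: "zariski_on (supp_div D) (gram q) D P"
  shows "q_zariski_decomp q D P (\<lambda>x. D x - P x)"
proof -
  let ?S = "supp_div D" and ?N = "\<lambda>x. D x - P x"
  have S: "finite ?S"
    using D by (rule finite_supp_div_if_effective)
  have P_bounds: "0 \<le> P x \<and> P x \<le> D x" for x
    using P by (simp add: zariski_on_def nef_below_def)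
  have P_supp: "supp_div P \<subseteq> ?S"
  proof
    fix x
    assume "x \<in> supp_div P"
    then have "P x \<noteq> 0"
      by (simp add: supp_div_def)
    then have "D x \<noteq> 0"
      using P_bounds[of x] by linarith
    then show "x \<in> ?S"
      by (simp add: supp_div_def)
  qed
  have N_supp: "supp_div ?N \<subseteq> ?S"
    using P_supp by (auto simp: supp_div_def)
  have "D x - P x \<noteq> 0 \<longleftrightarrow> P x < D x" for x
    using P_bounds[of x] by auto
  then have gap: "supp_div ?N = {i. P i < D i}"
    by (simp add: supp_div_def)
  have "effective P" "effective ?N"
    using qdivs_if_supp_div_subset[OF S P_supp] qdivs_if_supp_div_subset[OF S N_supp] P_bounds
    by (auto simp: effective_def)
  moreover have "q_nef q P"
    using P q_nef_iff_nef_on[OF q S P_supp] by (simp add: zariski_on_def nef_below_def)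
  moreover have "?N = (\<lambda>_. 0) \<or> q_exceptional q ?N"
    using P \<open>effective ?N\<close> by (auto simp: q_exceptional_iff_neg_definite_on gap zariski_on_def)
  moreover have "q P ?N = 0"
  proof -
    have "?N c * (\<Sum>j\<in>?S. gram q c j * P j) = 0" for c
      using P P_bounds[of c] by (cases "P c < D c") (auto simp: zariski_on_def)
    then show ?thesis
      unfolding sym_bilinear_gram_expand[OF q S P_supp N_supp] by (simp add: sum.neutral)
  qed
  ultimately show ?thesis
    by (simp add: q_zariski_decomp_def)
qed

theorem theorem3:
  fixes q :: "('p \<Rightarrow> rat) \<Rightarrow> ('p \<Rightarrow> rat) \<Rightarrow> rat"
    and D :: "'p \<Rightarrow> rat"
  assumes "sym_bilinear q"
    and "intersection_product q"
    and "effective D"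
  shows "\<exists>!(P, N). effective P \<and> effective N \<and> D = (\<lambda>x. P x + N x) \<and>
            q_nef q P \<and> (N = (\<lambda>_. 0) \<or> q_exceptional q N) \<and> q P N = 0"
proof -
  interpret sym_metzler "gram q"
    using assms(1,2) by (rule sym_metzler_gram)
  have S: "finite (supp_div D)"
    using assms(3) by (rule finite_supp_div_if_effective)
  obtain P where P: "zariski_on (supp_div D) (gram q) D P"
    using zariski_on_exists[OF S subset_refl] assms(3) by (auto simp: effective_def)
  have "\<exists>!(P, N). q_zariski_decomp q D P N"
  proof (rule ex1I[of _ "(P, \<lambda>x. D x - P x)"])
    show "case (P, \<lambda>x. D x - P x) of (P, N) \<Rightarrow> q_zariski_decomp q D P N"
      using q_zariski_decomp_if_zariski_on[OF assms(1,3) P] by simp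
    show "PN = (P, \<lambda>x. D x - P x)" if "case PN of (P, N) \<Rightarrow> q_zariski_decomp q D P N" for PN
      using that zariski_on_if_q_zariski_decomp[OF assms(1,3)] zariski_on_unique[OF S subset_refl _ P]
      by (auto split: prod.splits)
  qed
  then show ?thesis
    by (simp add: q_zariski_decomp_def)
qed

end
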